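(* Let $C(17)$ be the Pless symmetry code of length $36$ and $U$ the set of its codewords of weight $36$, viewed as $\pm1$ vectors by replacing each entry $2$ with $-1$. If $H$ is a Hadamard matrix of order $36$ whose rows are codewords from $U$, then the row set of any normalized Hadamard matrix obtained from $H$ (by negating rows and columns of $H$) is contained in a ternary code which is monomially equivalent to $C(17)$.
   Context: Let $\chi$ be the quadratic character of $GF(17)$ ($\chi(0)=0$, $\chi(a)=1$ for nonzero squares, $-1$ otherwise), $Q$ the $17\times17$ matrix with $Q_{ij}=\chi(j-i)$, and $S_{18}=\begin{pmatrix}0&\mathbf 1^T\\ \mathbf 1& Q\end{pmatrix}$ read over $GF(3)$. The Pless symmetry code $C(17)$ is the ternary code of length $36$ generated by $[I_{18}\mid S_{18}]$. A Hadamard matrix is normalized if all entries of its first row and first column equal $1$; a $\pm1$ vector is identified with a ternary vector via $-1\mapsto 2$, so negating a row corresponds to multiplying the codeword by $2$. Two ternary codes are monomially equivalent if one is obtained from the other by a permutation of coordinates followed by multiplying some coordinates by $2$. *)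

theory Defs
  imports "HOL-Number_Theory.Number_Theory" "HOL-Library.Numeral_Type"
begin

text \<open>Ternary vectors of length n: functions nat => 3 (the ring Z/3 = GF(3)),
  coordinates 0..n-1, zero outside.\<close>

type_synonym tvec = "nat \<Rightarrow> 3"

text \<open>Index 0 of S_18 is the bordering row/column; indices 1..17 correspond to GF(17)
  elements 0..16.\<close>

definition chi17 :: "int \<Rightarrow> int" where
  "chi17 a = Legendre a 17"

definition S18 :: "nat \<Rightarrow> nat \<Rightarrow> 3" where
  "S18 i j = (if i = 0 \<and> j = 0 then 0
              else if i = 0 \<or> j = 0 then 1
              else of_int (chi17 (int j - int i)))"

definition genC17 :: "nat \<Rightarrow> nat \<Rightarrow> 3" where
  "genC17 i j = (if j < 18 then (if i = j then 1 else 0) else S18 i (j - 18))"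

definition C17 :: "tvec set" where
  "C17 = {x. \<exists>a :: nat \<Rightarrow> 3.
              x = (\<lambda>j. if j < 36 then (\<Sum>i<18. a i * genC17 i j) else 0)}"

definition weight :: "tvec \<Rightarrow> nat" where
  "weight x = card {j. j < 36 \<and> x j \<noteq> 0}"

definition U17 :: "tvec set" where
  "U17 = {x \<in> C17. weight x = 36}"

definition to_tern :: "(nat \<Rightarrow> int) \<Rightarrow> tvec" where
  "to_tern v = (\<lambda>j. if j < 36 then of_int (v j) else 0)"

definition hadamard :: "nat \<Rightarrow> (nat \<Rightarrow> nat \<Rightarrow> int) \<Rightarrow> bool" where
  "hadamard n H \<longleftrightarrow>
     (\<forall>i<n. \<forall>j<n. H i j = 1 \<or> H i j = -1) \<and>
     (\<forall>i<n. \<forall>k<n. (\<Sum>j<n. H i j * H k j) = (if i = k then int n else 0))"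

definition normalized :: "nat \<Rightarrow> (nat \<Rightarrow> nat \<Rightarrow> int) \<Rightarrow> bool" where
  "normalized n H \<longleftrightarrow> (\<forall>j<n. H 0 j = 1) \<and> (\<forall>i<n. H i 0 = 1)"

definition negation_equiv :: "nat \<Rightarrow> (nat \<Rightarrow> nat \<Rightarrow> int) \<Rightarrow> (nat \<Rightarrow> nat \<Rightarrow> int) \<Rightarrow> bool" where
  "negation_equiv n H N \<longleftrightarrow>
     (\<exists>r c :: nat \<Rightarrow> int. (\<forall>i<n. r i = 1 \<or> r i = -1) \<and> (\<forall>j<n. c j = 1 \<or> c j = -1) \<and>
        (\<forall>i<n. \<forall>j<n. N i j = r i * H i j * c j))"

definition monomially_equiv :: "tvec set \<Rightarrow> tvec set \<Rightarrow> bool" where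
  "monomially_equiv D C \<longleftrightarrow>
     (\<exists>\<sigma> m. bij_betw \<sigma> {..<36} {..<36} \<and> (\<forall>j<36. m j = (1::3) \<or> m j = 2) \<and>
        D = (\<lambda>x. (\<lambda>j. if j < 36 then m j * x (\<sigma> j) else 0)) ` C)"

end

theory Submission
  imports Defs
begin

text \<open>Negating a row of H multiplies a codeword of C(17) by a scalar, which keeps it in the
  linear code C(17); negating columns multiplies coordinates by 1 or 2, so it maps C(17) onto a
  monomially equivalent code.\<close>

lemma C17_smult:
  assumes "x \<in> C17"
  shows "(\<lambda>j. k * x j) \<in> C17"
proof -
  from assms obtain a where a: "x = (\<lambda>j. if j < 36 then (\<Sum>i<18. a i * genC17 i j) else 0)"
    unfolding C17_def by blast
  have "(\<lambda>j. k * x j) = (\<lambda>j. if j < 36 then (\<Sum>i<18. (k * a i) * genC17 i j) else 0)"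
    by (rule ext) (simp add: a sum_distrib_left mult.assoc)
  then show ?thesis
    unfolding C17_def by (intro CollectI exI)
qed

lemma of_int_sign_in_3:
  assumes "s = 1 \<or> s = -1"
  shows "(of_int s :: 3) = 1 \<or> (of_int s :: 3) = 2"
  using assms by auto

lemma monomially_equiv_coordinate_scaling:
  assumes "\<forall>j<36. m j = (1::3) \<or> m j = 2"
  shows "monomially_equiv ((\<lambda>x j. if j < 36 then m j * x j else 0) ` C) C"
  unfolding monomially_equiv_def
  using assms by (intro exI[of _ "\<lambda>j. j"] exI[of _ m] conjI) (simp_all add: bij_betw_def)

lemma to_tern_negate:
  assumes "\<forall>j<36. w j = r * v j * c j"
  shows "to_tern w = (\<lambda>j. if j < 36 then of_int (c j) * (of_int r * to_tern v j) else 0)"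
  using assms by (auto simp: to_tern_def algebra_simps)

theorem lemma2:
  fixes H :: "nat \<Rightarrow> nat \<Rightarrow> int"
  assumes "hadamard 36 H"
    and "\<forall>i<36. to_tern (H i) \<in> U17"
  shows "\<forall>N. hadamard 36 N \<and> normalized 36 N \<and> negation_equiv 36 H N \<longrightarrow>
           (\<exists>D. monomially_equiv D C17 \<and> (\<forall>i<36. to_tern (N i) \<in> D))"
proof (intro allI impI)
  fix N assume "hadamard 36 N \<and> normalized 36 N \<and> negation_equiv 36 H N"
  then obtain r c :: "nat \<Rightarrow> int" where "\<forall>i<36. r i = 1 \<or> r i = -1"
    and c: "\<forall>j<36. c j = 1 \<or> c j = -1" and N: "\<forall>i<36. \<forall>j<36. N i j = r i * H i j * c j"
    unfolding negation_equiv_def by blast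
  define D where "D = (\<lambda>x j. if j < 36 then of_int (c j) * x j else 0) ` C17"
  have "monomially_equiv D C17"
    unfolding D_def by (rule monomially_equiv_coordinate_scaling) (simp add: c of_int_sign_in_3)
  moreover have "to_tern (N i) \<in> D" if "i < 36" for i
  proof -
    have "(\<lambda>j. of_int (r i) * to_tern (H i) j) \<in> C17"
      using C17_smult assms(2) \<open>i < 36\<close> unfolding U17_def by blast
    moreover have "\<forall>j<36. N i j = r i * H i j * c j"
      using N \<open>i < 36\<close> by blast
    ultimately show ?thesis
      unfolding D_def by (simp only: to_tern_negate) (rule imageI)
  qed
  ultimately show "\<exists>D. monomially_equiv D C17 \<and> (\<forall>i<36. to_tern (N i) \<in> D)" by blast
qed

end
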